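(* For $1\le i\le k$ let $G_i$ be an $r_i$-regular graph with $n_i$ vertices, let $r=r_1\cdots r_k$, and suppose $\gcd(n_i, r/r_i)=1$ for every $i$. If each $G_i$ is $\mathbb{Z}_{n_i}$-distance antimagic, then the direct product $G_1\times\cdots\times G_k$ is $\mathbb{Z}_{n_1\cdots n_k}$-distance antimagic.
   Context: The direct product $G_1\times\cdots\times G_k$ has vertex set $V(G_1)\times\cdots\times V(G_k)$, with $(x_1,\ldots,x_k)$ and $(y_1,\ldots,y_k)$ adjacent iff $x_iy_i\in E(G_i)$ for every $i$. For a graph $G$ with $n$ vertices, a $\mathbb{Z}_n$-distance antimagic labelling is a bijection $f:V(G)\to\mathbb{Z}_n$ such that the weights $w_f(x)=\sum_{y\in N(x)} f(y)$ (mod $n$, $N(x)$ the open neighbourhood) are pairwise distinct; $G$ is $\mathbb{Z}_n$-distance antimagic if such a labelling exists. *)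

theory Defs
  imports Main "HOL-Library.FuncSet"
begin

definition simple_graph :: "'a set \<Rightarrow> ('a \<Rightarrow> 'a \<Rightarrow> bool) \<Rightarrow> bool" where
  "simple_graph V E \<longleftrightarrow> finite V \<and> (\<forall>x y. E x y \<longrightarrow> x \<in> V \<and> y \<in> V)
     \<and> (\<forall>x y. E x y \<longrightarrow> E y x) \<and> (\<forall>x. \<not> E x x)"

definition nbhd :: "'a set \<Rightarrow> ('a \<Rightarrow> 'a \<Rightarrow> bool) \<Rightarrow> 'a \<Rightarrow> 'a set" where
  "nbhd V E x = {y \<in> V. E x y}"

definition regular :: "'a set \<Rightarrow> ('a \<Rightarrow> 'a \<Rightarrow> bool) \<Rightarrow> nat \<Rightarrow> bool" where
  "regular V E r \<longleftrightarrow> (\<forall>x\<in>V. card (nbhd V E x) = r)"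

definition Zn_distance_antimagic :: "'a set \<Rightarrow> ('a \<Rightarrow> 'a \<Rightarrow> bool) \<Rightarrow> bool" where
  "Zn_distance_antimagic V E \<longleftrightarrow>
     (\<exists>f. bij_betw f V {0..<card V} \<and>
          inj_on (\<lambda>x. (\<Sum>y\<in>nbhd V E x. f y) mod card V) V)"

definition dprod_V :: "nat \<Rightarrow> (nat \<Rightarrow> 'a set) \<Rightarrow> (nat \<Rightarrow> 'a) set" where
  "dprod_V k V = PiE {..<k} V"

definition dprod_E :: "nat \<Rightarrow> (nat \<Rightarrow> 'a \<Rightarrow> 'a \<Rightarrow> bool) \<Rightarrow> (nat \<Rightarrow> 'a) \<Rightarrow> (nat \<Rightarrow> 'a) \<Rightarrow> bool" where
  "dprod_E k E x y \<longleftrightarrow> x \<in> PiE {..<k} (\<lambda>_. UNIV) \<and> y \<in> PiE {..<k} (\<lambda>_. UNIV)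
      \<and> (\<forall>i<k. E i (x i) (y i))"

end

theory Submission
  imports Defs "HOL-Number_Theory.Cong"
begin

text \<open>Combine antimagic labellings \<open>f\<^sub>i\<close> of the factors into the mixed-radix labelling
  \<open>f(x) = \<Sum>\<^sub>i n\<^sub>1\<cdots>n\<^sub>i\<^sub>-\<^sub>1 f\<^sub>i(x\<^sub>i)\<close>, a bijection onto \<open>{0..<n\<^sub>1\<cdots>n\<^sub>k}\<close>.
  The neighbourhood of \<open>x\<close> in the direct product is the product of the neighbourhoods of
  its coordinates, so by regularity the weight of \<open>x\<close> is again a mixed-radix number, with
  \<open>i\<close>-th digit \<open>(r/r\<^sub>i) w\<^sub>i(x\<^sub>i)\<close>. Since \<open>r/r\<^sub>i\<close> is a unit modulo \<open>n\<^sub>i\<close>, these digits are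
  injective modulo \<open>n\<^sub>i\<close>, and a mixed-radix number modulo \<open>n\<^sub>1\<cdots>n\<^sub>k\<close> determines each of
  its digits modulo \<open>n\<^sub>i\<close>.\<close>

definition mixed_radix :: "nat \<Rightarrow> (nat \<Rightarrow> nat) \<Rightarrow> (nat \<Rightarrow> 'a \<Rightarrow> nat) \<Rightarrow> (nat \<Rightarrow> 'a) \<Rightarrow> nat" where
  "mixed_radix k n d x = (\<Sum>i<k. prod n {..<i} * d i (x i))"

lemma mixed_radix_cong:
  "(\<And>i. i < k \<Longrightarrow> x i = y i) \<Longrightarrow> mixed_radix k n d x = mixed_radix k n d y"
  unfolding mixed_radix_def by (intro sum.cong) auto

lemma mixed_radix_Suc:
  "mixed_radix (Suc k) n d x = mixed_radix k n d x + prod n {..<k} * d k (x k)"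
  unfolding mixed_radix_def by simp

lemma mixed_radix_less_prod:
  assumes "\<And>i z. i < k \<Longrightarrow> z \<in> V i \<Longrightarrow> d i z < n i" and "x \<in> PiE {..<k} V"
  shows "mixed_radix k n d x < prod n {..<k}"
  using assms
proof (induction k arbitrary: x)
  case 0
  then show ?case by (simp add: mixed_radix_def)
next
  case (Suc k)
  have "mixed_radix k n d x = mixed_radix k n d (restrict x {..<k})"
    by (rule mixed_radix_cong) simp
  also have "\<dots> < prod n {..<k}"
  proof (rule Suc.IH)
    show "restrict x {..<k} \<in> PiE {..<k} V" using Suc.prems(2) by (auto simp: PiE_iff)
  qed (simp add: Suc.prems(1))
  finally have low: "mixed_radix k n d x < prod n {..<k}" .
  have "x k \<in> V k" using Suc.prems(2) by auto
  hence "d k (x k) + 1 \<le> n k" using Suc.prems(1) by (simp add: Suc_le_eq)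
  hence "prod n {..<k} * (d k (x k) + 1) \<le> prod n {..<k} * n k" by (rule mult_left_mono) simp
  with low show ?case by (simp add: mixed_radix_Suc algebra_simps)
qed

lemma inj_on_mixed_radix_mod:
  assumes "\<And>i. i < k \<Longrightarrow> n i > 0"
    and "\<And>i. i < k \<Longrightarrow> inj_on (\<lambda>z. d i z mod n i) (V i)"
  shows "inj_on (\<lambda>x. mixed_radix k n d x mod prod n {..<k}) (PiE {..<k} V)"
  using assms
proof (induction k)
  case 0
  then show ?case by (auto intro: inj_onI)
next
  case (Suc k)
  define N where "N = prod n {..<k}"
  let ?S = "mixed_radix k n d"
  have "N > 0" unfolding N_def using Suc.prems(1) by (simp add: prod_pos)
  have IH: "inj_on (\<lambda>x. ?S x mod N) (PiE {..<k} V)"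
    unfolding N_def using Suc by simp
  have S_restrict: "?S (restrict x {..<k}) = ?S x" for x
    by (rule mixed_radix_cong) simp
  show ?case
  proof (rule inj_onI)
    fix x y assume x: "x \<in> PiE {..<Suc k} V" and y: "y \<in> PiE {..<Suc k} V"
      and "mixed_radix (Suc k) n d x mod prod n {..<Suc k}
         = mixed_radix (Suc k) n d y mod prod n {..<Suc k}"
    hence eq: "(?S x + N * d k (x k)) mod (N * n k) = (?S y + N * d k (y k)) mod (N * n k)"
      by (simp add: mixed_radix_Suc N_def)
    have "(?S x + N * d k (x k)) mod N = (?S y + N * d k (y k)) mod N"
      using arg_cong[OF eq, of "\<lambda>t. t mod N"] by (simp add: mod_mod_cancel)
    hence "?S (restrict x {..<k}) mod N = ?S (restrict y {..<k}) mod N"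
      by (simp add: S_restrict)
    moreover have "restrict x {..<k} \<in> PiE {..<k} V" "restrict y {..<k} \<in> PiE {..<k} V"
      using x y by (auto simp: PiE_iff)
    ultimately have low: "restrict x {..<k} = restrict y {..<k}"
      by (rule inj_onD[OF IH])
    hence "?S x = ?S y" by (metis S_restrict)
    with eq have "[?S x + N * d k (x k) = ?S x + N * d k (y k)] (mod N * n k)"
      by (simp add: cong_def)
    hence "[N * d k (x k) = N * d k (y k)] (mod N * n k)"
      by (simp only: cong_add_lcancel_nat)
    hence "N * (d k (x k) mod n k) = N * (d k (y k) mod n k)"
      unfolding cong_def by (simp only: mult_mod_right)
    hence "d k (x k) mod n k = d k (y k) mod n k" using \<open>N > 0\<close> by simp
    moreover have "x k \<in> V k" "y k \<in> V k" using x y by auto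
    ultimately have "x k = y k" using Suc.prems(2) by (auto dest: inj_onD)
    show "x = y"
    proof (rule extensionalityI)
      show "x \<in> extensional {..<Suc k}" "y \<in> extensional {..<Suc k}"
        using x y by (auto simp: PiE_def)
    next
      fix i assume "i \<in> {..<Suc k}"
      then show "x i = y i"
        using \<open>x k = y k\<close> fun_cong[OF low, of i] by (cases "i = k") auto
    qed
  qed
qed

lemma bij_betw_mixed_radix:
  assumes "\<And>i. i < k \<Longrightarrow> bij_betw (d i) (V i) {0..<n i}"
  shows "bij_betw (mixed_radix k n d) (PiE {..<k} V) {0..<prod n {..<k}}"
proof (cases "PiE {..<k} V = {}")
  case True
  then obtain i where "i < k" "V i = {}" by (auto simp: PiE_eq_empty_iff)
  with assms have "n i = 0" by (metis bij_betw_same_card card.empty card_atLeastLessThan diff_zero)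
  with \<open>i < k\<close> have "prod n {..<k} = 0" by (auto simp: prod_zero_iff)
  with True show ?thesis by (simp add: bij_betw_def)
next
  case False
  have digit_less: "\<And>i z. i < k \<Longrightarrow> z \<in> V i \<Longrightarrow> d i z < n i"
    using assms by (metis atLeastLessThan_iff bij_betwE)
  have "n i > 0" if "i < k" for i
    using False digit_less[OF that] that by (fastforce simp: PiE_eq_empty_iff)
  moreover have "inj_on (\<lambda>z. d i z mod n i) (V i)" if "i < k" for i
    using assms[OF that] digit_less[OF that] by (simp add: bij_betw_def inj_on_def)
  ultimately have "inj_on (\<lambda>x. mixed_radix k n d x mod prod n {..<k}) (PiE {..<k} V)"
    by (rule inj_on_mixed_radix_mod)
  moreover have less: "\<And>x. x \<in> PiE {..<k} V \<Longrightarrow> mixed_radix k n d x < prod n {..<k}"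
    using digit_less by (rule mixed_radix_less_prod)
  ultimately have inj: "inj_on (mixed_radix k n d) (PiE {..<k} V)"
    by (simp add: inj_on_def)
  have "card (V i) = n i" if "i < k" for i
    using bij_betw_same_card[OF assms[OF that]] by simp
  hence "card (PiE {..<k} V) = prod n {..<k}"
    by (simp add: card_PiE)
  with inj less show ?thesis
    by (simp add: bij_betw_def card_subset_eq card_image image_subset_iff)
qed

lemma inj_on_mult_mod_coprime:
  fixes c n :: nat
  assumes "coprime c n" and "inj_on (\<lambda>z. g z mod n) A"
  shows "inj_on (\<lambda>z. c * g z mod n) A"
proof (rule inj_onI)
  fix x y assume "x \<in> A" "y \<in> A" "c * g x mod n = c * g y mod n"
  hence "[g x = g y] (mod n)"
    using assms(1) cong_mult_lcancel_nat by (auto simp: cong_def)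
  with \<open>x \<in> A\<close> \<open>y \<in> A\<close> assms(2) show "x = y"
    by (auto simp: cong_def dest: inj_onD)
qed

lemma sum_PiE_coordinate:
  fixes h :: "'b \<Rightarrow> 'c :: comm_semiring_1"
  assumes "finite A" "\<And>j. j \<in> A \<Longrightarrow> finite (B j)" "i \<in> A"
  shows "(\<Sum>y\<in>PiE A B. h (y i)) = (\<Sum>z\<in>B i. h z) * of_nat (\<Prod>j\<in>A-{i}. card (B j))"
proof -
  have "(\<Sum>y\<in>PiE A B. h (y i)) = (\<Sum>y\<in>PiE A B. \<Prod>j\<in>A. if j = i then h (y j) else 1)"
    using assms by (intro sum.cong) (auto simp: prod.delta)
  also have "\<dots> = (\<Prod>j\<in>A. \<Sum>z\<in>B j. if j = i then h z else 1)"
    using assms by (simp add: prod_sum_PiE)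
  also have "\<dots> = (\<Sum>z\<in>B i. h z) * (\<Prod>j\<in>A-{i}. \<Sum>z\<in>B j. if j = i then h z else 1)"
    using assms by (simp add: prod.remove)
  also have "(\<Prod>j\<in>A-{i}. \<Sum>z\<in>B j. if j = i then h z else 1) = (\<Prod>j\<in>A-{i}. of_nat (card (B j)))"
    by (intro prod.cong) auto
  finally show ?thesis by simp
qed

lemma nbhd_dprod:
  assumes "\<And>i. i < k \<Longrightarrow> simple_graph (V i) (E i)" and "x \<in> dprod_V k V"
  shows "nbhd (dprod_V k V) (dprod_E k E) x = PiE {..<k} (\<lambda>i. nbhd (V i) (E i) (x i))"
proof -
  have "\<And>i a b. i < k \<Longrightarrow> E i a b \<Longrightarrow> b \<in> V i"
    using assms(1) unfolding simple_graph_def by blast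
  with assms(2) show ?thesis
    unfolding dprod_V_def nbhd_def dprod_E_def by (auto simp: PiE_iff extensional_def)
qed

lemma sum_nbhd_dprod_mixed_radix:
  assumes "\<And>i. i < k \<Longrightarrow> simple_graph (V i) (E i)"
    and "\<And>i. i < k \<Longrightarrow> regular (V i) (E i) (r i)"
    and "x \<in> dprod_V k V"
  shows "(\<Sum>y\<in>nbhd (dprod_V k V) (dprod_E k E) x. mixed_radix k n d y)
       = mixed_radix k n (\<lambda>i z. (\<Prod>j\<in>{..<k}-{i}. r j) * (\<Sum>y\<in>nbhd (V i) (E i) z. d i y)) x"
proof -
  let ?B = "\<lambda>i. nbhd (V i) (E i) (x i)"
  have fin: "\<And>i. i \<in> {..<k} \<Longrightarrow> finite (?B i)"
    using assms(1) unfolding simple_graph_def nbhd_def by auto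
  have card_B: "(\<Prod>j\<in>{..<k}-{i}. card (?B j)) = (\<Prod>j\<in>{..<k}-{i}. r j)" for i
    using assms(2,3) unfolding dprod_V_def regular_def by (intro prod.cong) auto
  have "(\<Sum>y\<in>nbhd (dprod_V k V) (dprod_E k E) x. mixed_radix k n d y)
      = (\<Sum>y\<in>PiE {..<k} ?B. mixed_radix k n d y)"
    by (simp add: nbhd_dprod[OF assms(1,3)])
  also have "\<dots> = (\<Sum>i<k. prod n {..<i} * (\<Sum>y\<in>PiE {..<k} ?B. d i (y i)))"
    unfolding mixed_radix_def by (simp add: sum.swap[of _ _ "{..<k}"] sum_distrib_left)
  also have "\<dots> = (\<Sum>i<k. prod n {..<i} * ((\<Prod>j\<in>{..<k}-{i}. r j) * (\<Sum>z\<in>?B i. d i z)))"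
  proof (intro sum.cong refl)
    fix i assume "i \<in> {..<k}"
    then show "prod n {..<i} * (\<Sum>y\<in>PiE {..<k} ?B. d i (y i))
             = prod n {..<i} * ((\<Prod>j\<in>{..<k}-{i}. r j) * (\<Sum>z\<in>?B i. d i z))"
      using sum_PiE_coordinate[of "{..<k}" ?B i "d i"] fin card_B by simp
  qed
  finally show ?thesis by (simp add: mixed_radix_def)
qed

theorem mainTheorem14:
  fixes k :: nat and V :: "nat \<Rightarrow> 'a set" and E :: "nat \<Rightarrow> 'a \<Rightarrow> 'a \<Rightarrow> bool"
    and r n :: "nat \<Rightarrow> nat"
  assumes graphs: "\<And>i. i < k \<Longrightarrow> simple_graph (V i) (E i)"
    and card: "\<And>i. i < k \<Longrightarrow> card (V i) = n i"
    and reg: "\<And>i. i < k \<Longrightarrow> regular (V i) (E i) (r i)"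
    and cop: "\<And>i. i < k \<Longrightarrow> gcd (n i) (\<Prod>j\<in>{..<k} - {i}. r j) = 1"
    and dam: "\<And>i. i < k \<Longrightarrow> Zn_distance_antimagic (V i) (E i)"
  shows "Zn_distance_antimagic (dprod_V k V) (dprod_E k E)"
proof -
  obtain f where f: "\<And>i. i < k \<Longrightarrow> bij_betw (f i) (V i) {0..<n i}
      \<and> inj_on (\<lambda>z. (\<Sum>y\<in>nbhd (V i) (E i) z. f i y) mod n i) (V i)"
    using dam card unfolding Zn_distance_antimagic_def by metis
  let ?P = "dprod_V k V" and ?lab = "mixed_radix k n f"
  let ?R = "\<lambda>i. \<Prod>j\<in>{..<k}-{i}. r j"
  let ?d = "\<lambda>i z. ?R i * (\<Sum>y\<in>nbhd (V i) (E i) z. f i y)"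
  have bij: "bij_betw ?lab ?P {0..<prod n {..<k}}"
    unfolding dprod_V_def using f by (simp add: bij_betw_mixed_radix)
  hence card_P: "card ?P = prod n {..<k}" by (simp add: bij_betw_same_card)
  have "inj_on (\<lambda>x. (\<Sum>y\<in>nbhd ?P (dprod_E k E) x. ?lab y) mod card ?P) ?P"
  proof (cases "?P = {}")
    case False
    then have "n i > 0" if "i < k" for i
      using card that graphs by (force simp: dprod_V_def PiE_eq_empty_iff simple_graph_def)
    moreover have "inj_on (\<lambda>z. ?R i * (\<Sum>y\<in>nbhd (V i) (E i) z. f i y) mod n i) (V i)"
      if "i < k" for i
    proof (rule inj_on_mult_mod_coprime)
      show "coprime (?R i) (n i)"
        using cop[OF that] by (simp add: coprime_iff_gcd_eq_1 gcd.commute)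
    qed (use f[OF that] in blast)
    ultimately have "inj_on (\<lambda>x. mixed_radix k n ?d x mod prod n {..<k}) ?P"
      unfolding dprod_V_def by (rule inj_on_mixed_radix_mod)
    moreover have "(\<Sum>y\<in>nbhd ?P (dprod_E k E) x. ?lab y) mod card ?P
        = mixed_radix k n ?d x mod prod n {..<k}" if "x \<in> ?P" for x
      using sum_nbhd_dprod_mixed_radix[OF graphs reg that] card_P by simp
    ultimately show ?thesis by (simp cong: inj_on_cong)
  qed simp
  with bij card_P show ?thesis unfolding Zn_distance_antimagic_def by metis
qed

end
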